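(* Let the alphabet be countable, let $\mu:\mathcal S\to\mathbb R$ be a probability on sentences and $\mu^*:\mathcal B\to\mathbb R$ a probability measure on the Borel $\sigma$-algebra of interpretations, related by $\mu^*(\mathrm{Mod}(\varphi))=\mu(\varphi)$ for all $\varphi\in\mathcal S$. Then $\mu^*(\mathcal I\setminus\widehat{\mathcal I})=0$ if and only if $\mu$ is Gaifman.
   Context: Setting: higher-order logic (Church's simple theory of types, without a description operator), with Henkin semantics: an interpretation $I$ consists of domains $D_\alpha$ ($D_o=\{\mathsf T,\mathsf F\}$, $D_{\alpha\to\beta}$ a set of functions) and a valuation of constants (equality denoting identity) such that every term has a denotation; $V(t,I)$ is the denotation of a closed term $t$. An alphabet is countable if its set of constants is countable. Sentences are closed terms of type $o$, $\mathcal S$ the set of sentences; a sentence is valid if true in every interpretation. $\mathcal I$ is the set of interpretations, $\mathrm{Mod}(\varphi)=\{I\in\mathcal I:\varphi\text{ valid in }I\}$, and $\mathcal B$ is the Borel $\sigma$-algebra of the topology on $\mathcal I$ with basis $\{\mathrm{Mod}(\varphi)\}$ (equal, for countable alphabet, to the $\sigma$-algebra generated by these sets). $I$ is separating if for every pair $r,s$ of closed terms of the same function type $\alpha\to\beta$ with $V(r,I)\neq V(s,I)$ there is a closed term $t$ of type $\alpha$ (over the alphabet) with $V((r\,t),I)\neq V((s\,t),I)$; $\widehat{\mathcal I}$ is the set of separating interpretations (it is $\mathcal B$-measurable). A probability on sentences is a non-negative $\mu:\mathcal S\to\mathbb R$ with $\mu(\varphi)=1$ for valid $\varphi$ and $\mu(\varphi\vee\psi)=\mu(\varphi)+\mu(\psi)$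 whenever $\neg(\varphi\wedge\psi)$ is valid. $\mu$ is Gaifman if for every pair $r,s$ of closed terms of the same function type $\alpha\to\beta$, $\mu(r=s)=\inf_{\{t_1,\dots,t_n\}}\mu(\bigwedge_{i=1}^n((r\,t_i)=(s\,t_i)))$ over all finite sets of closed terms of type $\alpha$. *)

theory Defs
  imports "HOL-Probability.Probability"
begin

section \<open>Syntax of Church's simple type theory (no description operator)\<close>

datatype ty = TO | TI | TFun ty ty (infixr "\<Rightarrow>\<^sub>T" 60)

text \<open>Terms over an alphabet of constants of type 'c (each constant has a type
  given by a typing function ct).  Bound variables are de Bruijn indices
  annotated with their type.\<close>
datatype 'c tm =
    Var nat ty
  | Const 'c
  | EqC ty
  | NegC
  | ConjC
  | DisjC
  | App "'c tm" "'c tm"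
  | Abs ty "'c tm"

fun tyck :: "('c \<Rightarrow> ty) \<Rightarrow> ty list \<Rightarrow> 'c tm \<Rightarrow> ty option" where
  "tyck ct G (Var n a) = (if n < length G \<and> G ! n = a then Some a else None)"
| "tyck ct G (Const c) = Some (ct c)"
| "tyck ct G (EqC a) = Some (a \<Rightarrow>\<^sub>T a \<Rightarrow>\<^sub>T TO)"
| "tyck ct G NegC = Some (TO \<Rightarrow>\<^sub>T TO)"
| "tyck ct G ConjC = Some (TO \<Rightarrow>\<^sub>T TO \<Rightarrow>\<^sub>T TO)"
| "tyck ct G DisjC = Some (TO \<Rightarrow>\<^sub>T TO \<Rightarrow>\<^sub>T TO)"
| "tyck ct G (App s t) =
     (case tyck ct G s of
        Some (TFun a b) \<Rightarrow> (if tyck ct G t = Some a then Some b else None)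
      | _ \<Rightarrow> None)"
| "tyck ct G (Abs a t) = map_option (TFun a) (tyck ct (a # G) t)"

text \<open>Syntactic type of a term (meaningful for well-typed terms).\<close>
fun ty_of :: "('c \<Rightarrow> ty) \<Rightarrow> 'c tm \<Rightarrow> ty" where
  "ty_of ct (Var n a) = a"
| "ty_of ct (Const c) = ct c"
| "ty_of ct (EqC a) = (a \<Rightarrow>\<^sub>T a \<Rightarrow>\<^sub>T TO)"
| "ty_of ct NegC = (TO \<Rightarrow>\<^sub>T TO)"
| "ty_of ct ConjC = (TO \<Rightarrow>\<^sub>T TO \<Rightarrow>\<^sub>T TO)"
| "ty_of ct DisjC = (TO \<Rightarrow>\<^sub>T TO \<Rightarrow>\<^sub>T TO)"
| "ty_of ct (App s t) = (case ty_of ct s of TFun a b \<Rightarrow> b | _ \<Rightarrow> TO)"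
| "ty_of ct (Abs a t) = TFun a (ty_of ct t)"

definition closed_terms :: "('c \<Rightarrow> ty) \<Rightarrow> ty \<Rightarrow> 'c tm set" where
  "closed_terms ct a = {t. tyck ct [] t = Some a}"

definition Sent :: "('c \<Rightarrow> ty) \<Rightarrow> 'c tm set" where
  "Sent ct = closed_terms ct TO"

definition neg :: "'c tm \<Rightarrow> 'c tm" where "neg p = App NegC p"
definition conj :: "'c tm \<Rightarrow> 'c tm \<Rightarrow> 'c tm" where "conj p q = App (App ConjC p) q"
definition disj :: "'c tm \<Rightarrow> 'c tm \<Rightarrow> 'c tm" where "disj p q = App (App DisjC p) q"
definition eq :: "('c \<Rightarrow> ty) \<Rightarrow> 'c tm \<Rightarrow> 'c tm \<Rightarrow> 'c tm" where
  "eq ct r s = App (App (EqC (ty_of ct r)) r) s"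

text \<open>The sentence True (used as the empty conjunction).\<close>
definition true_tm :: "'c tm" where
  "true_tm = App (App (EqC (TO \<Rightarrow>\<^sub>T TO)) NegC) NegC"

fun conj_list :: "'c tm list \<Rightarrow> 'c tm" where
  "conj_list [] = true_tm"
| "conj_list [p] = p"
| "conj_list (p # ps) = conj p (conj_list ps)"

section \<open>Henkin semantics\<close>

text \<open>An interpretation with carrier 'u: domains D_a, an application operation
  (so that D_(a=>b) is, via extensionality, a set of functions D_a -> D_b),
  the two truth values, and a valuation of the constants.\<close>
record ('c, 'u) interp =
  Dom :: "ty \<Rightarrow> 'u set"
  iapp :: "'u \<Rightarrow> 'u \<Rightarrow> 'u"
  tv :: 'u
  fv :: 'u
  cval :: "'c \<Rightarrow> 'u"

fun den :: "('c \<Rightarrow> ty) \<Rightarrow> ('c, 'u) interp \<Rightarrow> 'u list \<Rightarrow> 'c tm \<Rightarrow> 'u \<Rightarrow> bool" where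
  "den ct I rho (Var n a) v = (n < length rho \<and> v = rho ! n)"
| "den ct I rho (Const c) v = (v = cval I c)"
| "den ct I rho (EqC a) v =
     (v \<in> Dom I (a \<Rightarrow>\<^sub>T a \<Rightarrow>\<^sub>T TO) \<and>
      (\<forall>x\<in>Dom I a. \<forall>y\<in>Dom I a. iapp I (iapp I v x) y = (if x = y then tv I else fv I)))"
| "den ct I rho NegC v =
     (v \<in> Dom I (TO \<Rightarrow>\<^sub>T TO) \<and> iapp I v (tv I) = fv I \<and> iapp I v (fv I) = tv I)"
| "den ct I rho ConjC v =
     (v \<in> Dom I (TO \<Rightarrow>\<^sub>T TO \<Rightarrow>\<^sub>T TO) \<and>
      (\<forall>x\<in>Dom I TO. \<forall>y\<in>Dom I TO.
         iapp I (iapp I v x) y = (if x = tv I \<and> y = tv I then tv I else fv I)))"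
| "den ct I rho DisjC v =
     (v \<in> Dom I (TO \<Rightarrow>\<^sub>T TO \<Rightarrow>\<^sub>T TO) \<and>
      (\<forall>x\<in>Dom I TO. \<forall>y\<in>Dom I TO.
         iapp I (iapp I v x) y = (if x = tv I \<or> y = tv I then tv I else fv I)))"
| "den ct I rho (App s t) v = (\<exists>f x. den ct I rho s f \<and> den ct I rho t x \<and> v = iapp I f x)"
| "den ct I rho (Abs a t) v =
     (v \<in> Dom I (TFun a (ty_of ct t)) \<and> (\<forall>x\<in>Dom I a. den ct I (x # rho) t (iapp I v x)))"

definition is_interp :: "('c \<Rightarrow> ty) \<Rightarrow> ('c, 'u) interp \<Rightarrow> bool" where
  "is_interp ct I \<longleftrightarrow>
     Dom I TO = {tv I, fv I} \<and> tv I \<noteq> fv I \<and>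
     (\<forall>a. Dom I a \<noteq> {}) \<and>
     (\<forall>a b f x. f \<in> Dom I (a \<Rightarrow>\<^sub>T b) \<longrightarrow> x \<in> Dom I a \<longrightarrow> iapp I f x \<in> Dom I b) \<and>
     (\<forall>a b f g. f \<in> Dom I (a \<Rightarrow>\<^sub>T b) \<longrightarrow> g \<in> Dom I (a \<Rightarrow>\<^sub>T b) \<longrightarrow>
        (\<forall>x\<in>Dom I a. iapp I f x = iapp I g x) \<longrightarrow> f = g) \<and>
     (\<forall>c. cval I c \<in> Dom I (ct c)) \<and>
     (\<forall>G t a rho. tyck ct G t = Some a \<longrightarrow> length rho = length G \<longrightarrow>
        (\<forall>i<length G. rho ! i \<in> Dom I (G ! i)) \<longrightarrow> (\<exists>v. den ct I rho t v))"

definition Interps :: "('c \<Rightarrow> ty) \<Rightarrow> ('c, 'u) interp set" where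
  "Interps ct = {I. is_interp ct I}"

definition V :: "('c \<Rightarrow> ty) \<Rightarrow> 'c tm \<Rightarrow> ('c, 'u) interp \<Rightarrow> 'u" where
  "V ct t I = (THE v. den ct I [] t v)"

definition valid_in :: "('c \<Rightarrow> ty) \<Rightarrow> 'c tm \<Rightarrow> ('c, 'u) interp \<Rightarrow> bool" where
  "valid_in ct p I \<longleftrightarrow> V ct p I = tv I"

definition valid :: "('c \<Rightarrow> ty) \<Rightarrow> 'u itself \<Rightarrow> 'c tm \<Rightarrow> bool" where
  "valid ct U p \<longleftrightarrow> (\<forall>I \<in> (Interps ct :: ('c, 'u) interp set). valid_in ct p I)"

definition Mod :: "('c \<Rightarrow> ty) \<Rightarrow> 'c tm \<Rightarrow> ('c, 'u) interp set" where
  "Mod ct p = {I \<in> Interps ct. valid_in ct p I}"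

definition separating :: "('c \<Rightarrow> ty) \<Rightarrow> ('c, 'u) interp \<Rightarrow> bool" where
  "separating ct I \<longleftrightarrow>
     (\<forall>a b r s. r \<in> closed_terms ct (a \<Rightarrow>\<^sub>T b) \<longrightarrow> s \<in> closed_terms ct (a \<Rightarrow>\<^sub>T b) \<longrightarrow>
        V ct r I \<noteq> V ct s I \<longrightarrow>
        (\<exists>t \<in> closed_terms ct a. V ct (App r t) I \<noteq> V ct (App s t) I))"

definition SepInterps :: "('c \<Rightarrow> ty) \<Rightarrow> ('c, 'u) interp set" where
  "SepInterps ct = {I \<in> Interps ct. separating ct I}"

definition open_Interps :: "('c \<Rightarrow> ty) \<Rightarrow> ('c, 'u) interp set set" where
  "open_Interps ct = {U. \<exists>F \<subseteq> Mod ct ` Sent ct. U = \<Union>F}"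

definition borel_Interps :: "('c \<Rightarrow> ty) \<Rightarrow> ('c, 'u) interp set set" where
  "borel_Interps ct = sigma_sets (Interps ct) (open_Interps ct)"

section \<open>Probabilities on sentences\<close>

definition prob_on_sentences :: "('c \<Rightarrow> ty) \<Rightarrow> 'u itself \<Rightarrow> ('c tm \<Rightarrow> real) \<Rightarrow> bool" where
  "prob_on_sentences ct U mu \<longleftrightarrow>
     (\<forall>p \<in> Sent ct. 0 \<le> mu p) \<and>
     (\<forall>p \<in> Sent ct. valid ct U p \<longrightarrow> mu p = 1) \<and>
     (\<forall>p \<in> Sent ct. \<forall>q \<in> Sent ct. valid ct U (neg (conj p q)) \<longrightarrow> mu (disj p q) = mu p + mu q)"

definition gaifman :: "('c \<Rightarrow> ty) \<Rightarrow> ('c tm \<Rightarrow> real) \<Rightarrow> bool" where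
  "gaifman ct mu \<longleftrightarrow>
     (\<forall>a b r s. r \<in> closed_terms ct (a \<Rightarrow>\<^sub>T b) \<longrightarrow> s \<in> closed_terms ct (a \<Rightarrow>\<^sub>T b) \<longrightarrow>
        mu (eq ct r s) =
          (INF ts \<in> {ts. set ts \<subseteq> closed_terms ct a}.
             mu (conj_list (map (\<lambda>t. eq ct (App r t) (App s t)) ts))))"

end

theory Submission
  imports Defs
begin

text \<open>An interpretation is non-separating iff some closed terms r, s of a function type
  a \<Rightarrow> b denote different objects while r t and s t agree for every closed t of type a.
  For fixed r, s these interpretations are the models of all equations r t = s t minus the
  models of r = s. The first set is a countable intersection of sets Mod(\<phi>), so by continuity
  of the measure its probability is the infimum of the probabilities of the finite conjunctions
  of such equations. Hence the set is null iff \<mu>(r = s) equals that infimum, and as there are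
  only countably many pairs r, s, the non-separating interpretations are null iff \<mu> is Gaifman.\<close>

instance ty :: countable by countable_datatype
instance tm :: (countable) countable by countable_datatype

lemma ty_of_eq_if_tyck: "tyck ct G t = Some a \<Longrightarrow> ty_of ct t = a"
  by (induction t arbitrary: G a) (auto split: option.splits ty.splits if_splits)

lemma closed_terms_App:
  "r \<in> closed_terms ct (a \<Rightarrow>\<^sub>T b) \<Longrightarrow> t \<in> closed_terms ct a \<Longrightarrow> App r t \<in> closed_terms ct b"
  unfolding closed_terms_def by auto

lemma closed_terms_EqC: "EqC a \<in> closed_terms ct (a \<Rightarrow>\<^sub>T a \<Rightarrow>\<^sub>T TO)"
  and closed_terms_NegC: "NegC \<in> closed_terms ct (TO \<Rightarrow>\<^sub>T TO)"
  and closed_terms_ConjC: "ConjC \<in> closed_terms ct (TO \<Rightarrow>\<^sub>T TO \<Rightarrow>\<^sub>T TO)"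
  unfolding closed_terms_def by auto

lemma eq_in_Sent: "r \<in> closed_terms ct a \<Longrightarrow> s \<in> closed_terms ct a \<Longrightarrow> eq ct r s \<in> Sent ct"
  unfolding Sent_def eq_def closed_terms_def by (auto dest: ty_of_eq_if_tyck)

lemma conj_in_Sent: "p \<in> Sent ct \<Longrightarrow> q \<in> Sent ct \<Longrightarrow> conj p q \<in> Sent ct"
  unfolding Sent_def conj_def closed_terms_def by auto

lemma true_tm_eq: "true_tm = eq ct NegC NegC"
  unfolding true_tm_def eq_def by simp

lemma conj_list_in_Sent: "set ps \<subseteq> Sent ct \<Longrightarrow> conj_list ps \<in> Sent ct"
  by (induction ps rule: conj_list.induct)
    (auto simp: true_tm_eq[of ct] intro: eq_in_Sent closed_terms_NegC conj_in_Sent)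

context
  fixes ct :: "'c \<Rightarrow> ty" and I :: "('c, 'u) interp"
  assumes I: "is_interp ct I"
begin

lemma interp_tv_neq_fv: "tv I \<noteq> fv I"
  and interp_Dom_TO: "Dom I TO = {tv I, fv I}"
  and interp_cval_in_Dom: "cval I c \<in> Dom I (ct c)"
  and interp_iapp_in_Dom: "f \<in> Dom I (a \<Rightarrow>\<^sub>T b) \<Longrightarrow> x \<in> Dom I a \<Longrightarrow> iapp I f x \<in> Dom I b"
  using I by (simp_all add: is_interp_def)

lemma interp_ext:
  "f \<in> Dom I (a \<Rightarrow>\<^sub>T b) \<Longrightarrow> g \<in> Dom I (a \<Rightarrow>\<^sub>T b) \<Longrightarrow> (\<And>x. x \<in> Dom I a \<Longrightarrow> iapp I f x = iapp I g x)
    \<Longrightarrow> f = g"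
  using I unfolding is_interp_def by metis

lemma interp_ext2:
  assumes v: "v \<in> Dom I (a \<Rightarrow>\<^sub>T b \<Rightarrow>\<^sub>T c)" and w: "w \<in> Dom I (a \<Rightarrow>\<^sub>T b \<Rightarrow>\<^sub>T c)"
    and vw: "\<And>x y. x \<in> Dom I a \<Longrightarrow> y \<in> Dom I b \<Longrightarrow> iapp I (iapp I v x) y = iapp I (iapp I w x) y"
  shows "v = w"
proof (rule interp_ext[OF v w])
  fix x assume x: "x \<in> Dom I a"
  show "iapp I v x = iapp I w x"
    by (rule interp_ext[OF interp_iapp_in_Dom[OF v x] interp_iapp_in_Dom[OF w x]]) (rule vw[OF x])
qed

lemma den_unique: "den ct I rho t v \<Longrightarrow> den ct I rho t w \<Longrightarrow> v = w"
proof (induction t arbitrary: rho v w)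
  case (EqC a)
  show ?case by (rule interp_ext2[of _ a a TO]) (use EqC.prems in auto)
next
  case NegC
  show ?case by (rule interp_ext[of _ TO TO]) (use NegC.prems in \<open>auto simp: interp_Dom_TO\<close>)
next
  case ConjC
  show ?case by (rule interp_ext2[of _ TO TO TO]) (use ConjC.prems in auto)
next
  case DisjC
  show ?case by (rule interp_ext2[of _ TO TO TO]) (use DisjC.prems in auto)
next
  case (App s t)
  from App.prems obtain f x f' x' where
    "den ct I rho s f" "den ct I rho t x" "v = iapp I f x"
    "den ct I rho s f'" "den ct I rho t x'" "w = iapp I f' x'"
    by auto
  with App.IH show ?case by metis
next
  case (Abs a t)
  show ?case
  proof (rule interp_ext[of _ a "ty_of ct t"])
    fix x assume "x \<in> Dom I a"
    with Abs.prems show "iapp I v x = iapp I w x" by (auto intro: Abs.IH)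
  qed (use Abs.prems in simp_all)
qed simp_all

lemma den_in_Dom:
  "tyck ct G t = Some a \<Longrightarrow> length rho = length G \<Longrightarrow> \<forall>i<length G. rho ! i \<in> Dom I (G ! i)
    \<Longrightarrow> den ct I rho t v \<Longrightarrow> v \<in> Dom I a"
proof (induction t arbitrary: G a rho v)
  case (App s t)
  then obtain a' where s: "tyck ct G s = Some (a' \<Rightarrow>\<^sub>T a)" and t: "tyck ct G t = Some a'"
    by (auto split: option.splits ty.splits if_splits)
  from App.prems(4) obtain f x where "den ct I rho s f" "den ct I rho t x" "v = iapp I f x"
    by auto
  with App.IH s t App.prems(2,3) show ?case by (blast intro: interp_iapp_in_Dom)
next
  case (Abs b t)
  then show ?case by (auto dest: ty_of_eq_if_tyck)
qed (auto simp: interp_cval_in_Dom split: if_splits)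

context
  fixes t :: "'c tm" and a :: ty
  assumes t: "t \<in> closed_terms ct a"
begin

lemma den_V: "den ct I [] t (V ct t I)"
proof -
  have "\<forall>G t a rho. tyck ct G t = Some a \<longrightarrow> length rho = length G \<longrightarrow>
      (\<forall>i<length G. rho ! i \<in> Dom I (G ! i)) \<longrightarrow> (\<exists>v. den ct I rho t v)"
    using I unfolding is_interp_def by (elim conjE)
  then have "\<exists>v. den ct I [] t v"
    using t unfolding closed_terms_def by force
  then show ?thesis unfolding V_def by (metis theI den_unique)
qed

lemma V_eqI: "den ct I [] t v \<Longrightarrow> V ct t I = v"
  using den_V den_unique by blast

lemma V_in_Dom: "V ct t I \<in> Dom I a"
  using den_in_Dom[of "[]" t a "[]"] den_V t by (simp add: closed_terms_def)

end

lemma V_App: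
  "r \<in> closed_terms ct (a \<Rightarrow>\<^sub>T b) \<Longrightarrow> t \<in> closed_terms ct a
    \<Longrightarrow> V ct (App r t) I = iapp I (V ct r I) (V ct t I)"
  by (intro V_eqI closed_terms_App) (auto intro: den_V)

lemma valid_in_eq_iff:
  assumes r: "r \<in> closed_terms ct a" and s: "s \<in> closed_terms ct a"
  shows "valid_in ct (eq ct r s) I \<longleftrightarrow> V ct r I = V ct s I"
proof -
  have "ty_of ct r = a" using r by (simp add: closed_terms_def ty_of_eq_if_tyck)
  then have "V ct (eq ct r s) I = iapp I (iapp I (V ct (EqC a) I) (V ct r I)) (V ct s I)"
    unfolding eq_def using V_App[OF closed_terms_App[OF closed_terms_EqC r] s] V_App[OF closed_terms_EqC r]
    by simp
  also have "\<dots> = (if V ct r I = V ct s I then tv I else fv I)"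
    using den_V[OF closed_terms_EqC] V_in_Dom[OF r] V_in_Dom[OF s] by auto
  finally show ?thesis unfolding valid_in_def using interp_tv_neq_fv by auto
qed

lemma valid_in_conj_iff:
  assumes p: "p \<in> Sent ct" and q: "q \<in> Sent ct"
  shows "valid_in ct (conj p q) I \<longleftrightarrow> valid_in ct p I \<and> valid_in ct q I"
proof -
  have p': "p \<in> closed_terms ct TO" and q': "q \<in> closed_terms ct TO" using p q by (auto simp: Sent_def)
  have "V ct (conj p q) I = iapp I (iapp I (V ct ConjC I) (V ct p I)) (V ct q I)"
    unfolding conj_def using V_App[OF closed_terms_App[OF closed_terms_ConjC p'] q'] V_App[OF closed_terms_ConjC p']
    by simp
  also have "\<dots> = (if V ct p I = tv I \<and> V ct q I = tv I then tv I else fv I)"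
    using den_V[OF closed_terms_ConjC] V_in_Dom[OF p'] V_in_Dom[OF q'] by auto
  finally show ?thesis unfolding valid_in_def using interp_tv_neq_fv by auto
qed

lemma valid_in_conj_list_iff:
  "set ps \<subseteq> Sent ct \<Longrightarrow> valid_in ct (conj_list ps) I \<longleftrightarrow> (\<forall>p\<in>set ps. valid_in ct p I)"
proof (induction ps rule: conj_list.induct)
  case 1
  show ?case by (simp add: true_tm_eq[of ct] valid_in_eq_iff[OF closed_terms_NegC closed_terms_NegC])
next
  case (3 p q ps)
  then show ?case by (simp only: conj_list.simps(3)) (simp add: valid_in_conj_iff conj_list_in_Sent)
qed simp

end

lemma Mod_conj_list:
  "set ps \<subseteq> Sent ct \<Longrightarrow> Mod ct (conj_list ps) = Interps ct \<inter> (\<Inter>p\<in>set ps. Mod ct p)"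
  by (auto simp: Mod_def Interps_def valid_in_conj_list_iff)

section \<open>Countable intersections of events\<close>

lemma sets_space_INT:
  assumes "countable T" and B: "\<And>t. t \<in> T \<Longrightarrow> B t \<in> sets M"
  shows "space M \<inter> (\<Inter>t\<in>T. B t) \<in> sets M"
proof -
  have "{x \<in> space M. x \<in> B t} = B t" if "t \<in> T" for t
    using sets.sets_into_space[OF B[OF that]] by blast
  then have "{x \<in> space M. \<forall>t\<in>T. x \<in> B t} \<in> sets M"
    using assms by (intro sets.sets_Collect_countable_All') auto
  moreover have "{x \<in> space M. \<forall>t\<in>T. x \<in> B t} = space M \<inter> (\<Inter>t\<in>T. B t)" by blast
  ultimately show ?thesis by simp
qed

lemma (in finite_measure) measure_INT_eq_INF_finite:
  assumes T: "countable T" and B: "\<And>t. t \<in> T \<Longrightarrow> B t \<in> sets M"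
  shows "measure M (space M \<inter> (\<Inter>t\<in>T. B t)) =
    (INF ts \<in> {ts. set ts \<subseteq> T}. measure M (space M \<inter> (\<Inter>t\<in>set ts. B t)))"
proof (cases "T = {}")
  case False
  let ?A = "space M \<inter> (\<Inter>t\<in>T. B t)"
  let ?F = "\<lambda>ts. measure M (space M \<inter> (\<Inter>t\<in>set ts. B t))"
  have sets_INT: "space M \<inter> (\<Inter>t\<in>S. B t) \<in> sets M" if "S \<subseteq> T" "countable S" for S
    using that B by (intro sets_space_INT) auto
  have "measure M ?A \<le> (INF ts \<in> {ts. set ts \<subseteq> T}. ?F ts)"
    by (rule cINF_greatest) (auto intro!: finite_measure_mono sets_INT countable_finite exI[of _ "[]"])
  moreover have "(INF ts \<in> {ts. set ts \<subseteq> T}. ?F ts) \<le> measure M ?A"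
  proof -
    define e where "e = from_nat_into T"
    have range_e: "range e = T" unfolding e_def using range_from_nat_into[OF False T] .
    define C where "C n = space M \<inter> (\<Inter>t\<in>set (map e [0..<n]). B t)" for n
    have "(\<Inter>n. C n) = ?A"
      unfolding C_def using range_e by (fastforce intro: lessI)
    moreover have "C n \<in> sets M" for n
      unfolding C_def using range_e by (intro sets_INT) (auto intro: countable_finite)
    moreover have "decseq C" unfolding C_def decseq_def by auto
    ultimately have "(\<lambda>n. measure M (C n)) \<longlonglongrightarrow> measure M ?A"
      using finite_Lim_measure_decseq by (metis image_subsetI)
    moreover have "(INF ts \<in> {ts. set ts \<subseteq> T}. ?F ts) \<le> measure M (C n)" for n
      unfolding C_def by (rule cINF_lower) (use range_e in \<open>auto intro: bdd_belowI[of _ 0]\<close>)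
    ultimately show ?thesis by (intro tendsto_lowerbound) auto
  qed
  ultimately show ?thesis by simp
qed simp

lemma (in finite_measure) measure_UN_eq_0_iff:
  assumes "countable I" and N: "\<And>i. i \<in> I \<Longrightarrow> N i \<in> sets M"
  shows "measure M (\<Union>i\<in>I. N i) = 0 \<longleftrightarrow> (\<forall>i\<in>I. measure M (N i) = 0)"
proof -
  have null_iff: "measure M X = 0 \<longleftrightarrow> X \<in> null_sets M" if "X \<in> sets M" for X
    using that emeasure_eq_measure[of X] by (auto simp: null_sets_def)
  have "(\<Union>i\<in>I. N i) \<in> sets M" using assms by (intro sets.countable_UN'') auto
  with N show ?thesis
    by (simp add: null_iff) (blast intro: null_sets_UN'[OF \<open>countable I\<close>] null_sets_subset)
qed

section \<open>Non-separating interpretations\<close>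

definition unseparated :: "('c \<Rightarrow> ty) \<Rightarrow> ty \<Rightarrow> 'c tm \<Rightarrow> 'c tm \<Rightarrow> ('c, 'u) interp set" where
  "unseparated ct a r s = {I \<in> Interps ct. V ct r I \<noteq> V ct s I \<and>
     (\<forall>t \<in> closed_terms ct a. V ct (App r t) I = V ct (App s t) I)}"

definition fun_term_pairs :: "('c \<Rightarrow> ty) \<Rightarrow> (ty \<times> ty \<times> 'c tm \<times> 'c tm) set" where
  "fun_term_pairs ct = {(a, b, r, s). r \<in> closed_terms ct (a \<Rightarrow>\<^sub>T b) \<and> s \<in> closed_terms ct (a \<Rightarrow>\<^sub>T b)}"

lemma Interps_diff_SepInterps:
  "Interps ct - SepInterps ct = (\<Union>(a, b, r, s) \<in> fun_term_pairs ct. unseparated ct a r s)"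
  unfolding SepInterps_def separating_def unseparated_def fun_term_pairs_def by blast

lemma unseparated_eq_diff_Mod:
  fixes r s :: "'c tm"
  assumes r: "r \<in> closed_terms ct (a \<Rightarrow>\<^sub>T b)" and s: "s \<in> closed_terms ct (a \<Rightarrow>\<^sub>T b)"
  shows "(unseparated ct a r s :: ('c, 'u) interp set) =
    (Interps ct \<inter> (\<Inter>t\<in>closed_terms ct a. Mod ct (eq ct (App r t) (App s t)))) - Mod ct (eq ct r s)"
  using r s by (auto simp: unseparated_def Mod_def Interps_def valid_in_eq_iff
      valid_in_eq_iff[OF _ closed_terms_App[OF r] closed_terms_App[OF s]])

lemma Mod_eq_subset_Mod_eq_App:
  fixes r s :: "'c tm"
  assumes r: "r \<in> closed_terms ct (a \<Rightarrow>\<^sub>T b)" and s: "s \<in> closed_terms ct (a \<Rightarrow>\<^sub>T b)"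
  shows "(Mod ct (eq ct r s) :: ('c, 'u) interp set) \<subseteq>
    Interps ct \<inter> (\<Inter>t\<in>closed_terms ct a. Mod ct (eq ct (App r t) (App s t)))"
  using r s by (auto simp: Mod_def Interps_def valid_in_eq_iff V_App
      valid_in_eq_iff[OF _ closed_terms_App[OF r] closed_terms_App[OF s]])

locale sentence_measure = prob_space M
  for M :: "('c::countable, 'u) interp measure" +
  fixes ct :: "'c \<Rightarrow> ty" and mu :: "'c tm \<Rightarrow> real"
  assumes space_eq: "space M = Interps ct"
    and sets_eq: "sets M = borel_Interps ct"
    and measure_Mod: "p \<in> Sent ct \<Longrightarrow> measure M (Mod ct p) = mu p"
begin

lemma Mod_in_sets: "p \<in> Sent ct \<Longrightarrow> Mod ct p \<in> sets M"
  unfolding sets_eq borel_Interps_def open_Interps_def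
  by (intro sigma_sets.Basic CollectI exI[of _ "{Mod ct p}"]) auto

lemma measure_Mod_eq_App_INT:
  assumes r: "r \<in> closed_terms ct (a \<Rightarrow>\<^sub>T b)" and s: "s \<in> closed_terms ct (a \<Rightarrow>\<^sub>T b)"
  shows "measure M (Interps ct \<inter> (\<Inter>t\<in>closed_terms ct a. Mod ct (eq ct (App r t) (App s t)))) =
    (INF ts \<in> {ts. set ts \<subseteq> closed_terms ct a}. mu (conj_list (map (\<lambda>t. eq ct (App r t) (App s t)) ts)))"
proof -
  have eqs_Sent: "set ts \<subseteq> closed_terms ct a \<Longrightarrow>
      set (map (\<lambda>t. eq ct (App r t) (App s t)) ts) \<subseteq> Sent ct" for ts
    using r s by (auto intro: eq_in_Sent closed_terms_App)
  have "measure M (Interps ct \<inter> (\<Inter>t\<in>closed_terms ct a. Mod ct (eq ct (App r t) (App s t)))) =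
      (INF ts \<in> {ts. set ts \<subseteq> closed_terms ct a}.
        measure M (Interps ct \<inter> (\<Inter>t\<in>set ts. Mod ct (eq ct (App r t) (App s t)))))"
    unfolding space_eq[symmetric] using r s
    by (intro measure_INT_eq_INF_finite) (auto intro: Mod_in_sets eq_in_Sent closed_terms_App)
  also have "\<dots> = (INF ts \<in> {ts. set ts \<subseteq> closed_terms ct a}.
      mu (conj_list (map (\<lambda>t. eq ct (App r t) (App s t)) ts)))"
  proof (rule INF_cong[OF refl])
    fix ts assume "ts \<in> {ts. set ts \<subseteq> closed_terms ct a}"
    then have eqs: "set (map (\<lambda>t. eq ct (App r t) (App s t)) ts) \<subseteq> Sent ct"
      using eqs_Sent by simp
    show "measure M (Interps ct \<inter> (\<Inter>t\<in>set ts. Mod ct (eq ct (App r t) (App s t)))) =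
        mu (conj_list (map (\<lambda>t. eq ct (App r t) (App s t)) ts))"
      using measure_Mod[OF conj_list_in_Sent[OF eqs]] Mod_conj_list[OF eqs] by (metis set_map image_image)
  qed
  finally show ?thesis .
qed

lemma unseparated_in_sets_and_measure:
  assumes r: "r \<in> closed_terms ct (a \<Rightarrow>\<^sub>T b)" and s: "s \<in> closed_terms ct (a \<Rightarrow>\<^sub>T b)"
  shows "unseparated ct a r s \<in> sets M"
    and "measure M (unseparated ct a r s) =
      (INF ts \<in> {ts. set ts \<subseteq> closed_terms ct a}. mu (conj_list (map (\<lambda>t. eq ct (App r t) (App s t)) ts)))
      - mu (eq ct r s)"
proof -
  let ?A = "Interps ct \<inter> (\<Inter>t\<in>closed_terms ct a. Mod ct (eq ct (App r t) (App s t)))"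
  have A: "?A \<in> sets M"
    unfolding space_eq[symmetric]
    by (intro sets_space_INT countableI_type Mod_in_sets
        eq_in_Sent[OF closed_terms_App[OF r] closed_terms_App[OF s]])
  have E: "Mod ct (eq ct r s) \<in> sets M"
    by (intro Mod_in_sets eq_in_Sent[OF r s])
  show "unseparated ct a r s \<in> sets M"
    unfolding unseparated_eq_diff_Mod[OF r s] using A E by blast
  show "measure M (unseparated ct a r s) =
      (INF ts \<in> {ts. set ts \<subseteq> closed_terms ct a}. mu (conj_list (map (\<lambda>t. eq ct (App r t) (App s t)) ts)))
      - mu (eq ct r s)"
    unfolding unseparated_eq_diff_Mod[OF r s] finite_measure_Diff[OF A E Mod_eq_subset_Mod_eq_App[OF r s]]
      measure_Mod_eq_App_INT[OF r s] measure_Mod[OF eq_in_Sent[OF r s]] ..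
qed

end

theorem mainTheorem14:
  fixes ct :: "'c::countable \<Rightarrow> ty"
    and mu :: "'c tm \<Rightarrow> real"
    and M :: "('c, 'u) interp measure"
  assumes "prob_on_sentences ct TYPE('u) mu"
    and "prob_space M"
    and "space M = Interps ct"
    and "sets M = borel_Interps ct"
    and "\<forall>p \<in> Sent ct. measure M (Mod ct p) = mu p"
  shows "measure M (Interps ct - SepInterps ct) = 0 \<longleftrightarrow> gaifman ct mu"
proof -
  interpret sentence_measure M ct mu
    using assms(2-5) unfolding sentence_measure_def sentence_measure_axioms_def by blast
  have sets_unseparated: "(case i of (a, b, r, s) \<Rightarrow> unseparated ct a r s) \<in> sets M"
    if "i \<in> fun_term_pairs ct" for i
    using that unfolding fun_term_pairs_def by (auto intro: unseparated_in_sets_and_measure(1))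
  have "measure M (Interps ct - SepInterps ct) = 0 \<longleftrightarrow>
      (\<forall>(a, b, r, s) \<in> fun_term_pairs ct. measure M (unseparated ct a r s) = 0)"
    unfolding Interps_diff_SepInterps
    using measure_UN_eq_0_iff[OF countableI_type sets_unseparated] by (simp add: split_def)
  also have "\<dots> \<longleftrightarrow> gaifman ct mu"
    unfolding gaifman_def fun_term_pairs_def
    using unseparated_in_sets_and_measure(2) by force
  finally show ?thesis .
qed

end
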